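(* Let $R$ be a commutative multiplicative hyperring with scalar identity $1$, and let $\alpha$ be a good endomorphism of $R$. Then the set $\mathrm{Nil}_\alpha(R)$ of all $\alpha$-nilpotent elements of $R$ is a hyperideal of $R$.
   Context: A multiplicative hyperring is an abelian group $(R,+)$ with a hyperoperation $\circ:R\times R\to \mathcal P^*(R)$ (nonempty subsets) such that $a\circ(b\circ c)=(a\circ b)\circ c$, $a\circ(b+c)\subseteq a\circ b+a\circ c$, $(b+c)\circ a\subseteq b\circ a+c\circ a$, and $a\circ(-b)=(-a)\circ b=-(a\circ b)$. Products of subsets are unions of elementwise products, and $x^n=x\circ\cdots\circ x$ ($n$ factors). Commutative means $a\circ b=b\circ a$. A scalar identity $1$ satisfies $1\circ a=\{a\}$ for all $a$. A hyperideal is a nonempty $I\subseteq R$ closed under subtraction with $r\circ x\subseteq I$ for $r\in R$, $x\in I$. Standing assumption: all hyperideals are $\mathbf C$-hyperideals, i.e. for every finite product $A=r_1\circ\cdots\circ r_n$, $A\cap I\ne\emptyset$ implies $A\subseteq I$. A good endomorphism $\alpha$ satisfies $\alpha(x+y)=\alpha(x)+\alpha(y)$ and $\alpha(x\circ y)=\alpha(x)\circ\alpha(y)$; it is applied to sets elementwise. An element $x$ is $\alpha$-nilpotent if $0\in\alpha(x^n)$ for some integer $n>0$. *)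

theory Defs
  imports Main
begin

text \<open>The abelian group (R,+) is the whole type 'a (class ab_group_add);
  the hyperoperation is hm :: 'a \<Rightarrow> 'a \<Rightarrow> 'a set.\<close>

definition hsetprod :: "('a \<Rightarrow> 'a \<Rightarrow> 'a set) \<Rightarrow> 'a set \<Rightarrow> 'a set \<Rightarrow> 'a set" where
  "hsetprod hm A B = (\<Union>a\<in>A. \<Union>b\<in>B. hm a b)"

definition setsum_add :: "'a::ab_group_add set \<Rightarrow> 'a set \<Rightarrow> 'a set" where
  "setsum_add A B = {a + b | a b. a \<in> A \<and> b \<in> B}"

definition mult_hyperring :: "('a::ab_group_add \<Rightarrow> 'a \<Rightarrow> 'a set) \<Rightarrow> bool" where
  "mult_hyperring hm \<longleftrightarrow>
     (\<forall>a b. hm a b \<noteq> {}) \<and>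
     (\<forall>a b c. hsetprod hm {a} (hm b c) = hsetprod hm (hm a b) {c}) \<and>
     (\<forall>a b c. hm a (b + c) \<subseteq> setsum_add (hm a b) (hm a c)) \<and>
     (\<forall>a b c. hm (b + c) a \<subseteq> setsum_add (hm b a) (hm c a)) \<and>
     (\<forall>a b. hm a (- b) = uminus ` hm a b \<and> hm (- a) b = uminus ` hm a b)"

definition hcommutative :: "('a \<Rightarrow> 'a \<Rightarrow> 'a set) \<Rightarrow> bool" where
  "hcommutative hm \<longleftrightarrow> (\<forall>a b. hm a b = hm b a)"

definition scalar_identity :: "('a \<Rightarrow> 'a \<Rightarrow> 'a set) \<Rightarrow> 'a \<Rightarrow> bool" where
  "scalar_identity hm e \<longleftrightarrow> (\<forall>a. hm e a = {a})"

text \<open>Powers x^n = x o ... o x (n factors), meaningful for n \<ge> 1;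
  the value at n = 0 is an unused convention.\<close>
fun hpow :: "('a \<Rightarrow> 'a \<Rightarrow> 'a set) \<Rightarrow> 'a \<Rightarrow> nat \<Rightarrow> 'a set" where
  "hpow hm x 0 = {x}"
| "hpow hm x (Suc 0) = {x}"
| "hpow hm x (Suc (Suc n)) = hsetprod hm (hpow hm x (Suc n)) {x}"

fun lprod :: "('a \<Rightarrow> 'a \<Rightarrow> 'a set) \<Rightarrow> 'a list \<Rightarrow> 'a set" where
  "lprod hm [] = {}"
| "lprod hm [r] = {r}"
| "lprod hm (r # s # rs) = hsetprod hm {r} (lprod hm (s # rs))"

definition hyperideal :: "('a::ab_group_add \<Rightarrow> 'a \<Rightarrow> 'a set) \<Rightarrow> 'a set \<Rightarrow> bool" where
  "hyperideal hm I \<longleftrightarrow> I \<noteq> {} \<and> (\<forall>x\<in>I. \<forall>y\<in>I. x - y \<in> I) \<and>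
     (\<forall>r. \<forall>x\<in>I. hm r x \<subseteq> I)"

definition C_hyperideal :: "('a::ab_group_add \<Rightarrow> 'a \<Rightarrow> 'a set) \<Rightarrow> 'a set \<Rightarrow> bool" where
  "C_hyperideal hm I \<longleftrightarrow> hyperideal hm I \<and>
     (\<forall>rs. rs \<noteq> [] \<longrightarrow> lprod hm rs \<inter> I \<noteq> {} \<longrightarrow> lprod hm rs \<subseteq> I)"

definition good_endomorphism :: "('a::ab_group_add \<Rightarrow> 'a \<Rightarrow> 'a set) \<Rightarrow> ('a \<Rightarrow> 'a) \<Rightarrow> bool" where
  "good_endomorphism hm \<alpha> \<longleftrightarrow> (\<forall>x y. \<alpha> (x + y) = \<alpha> x + \<alpha> y) \<and>
     (\<forall>x y. \<alpha> ` hm x y = hm (\<alpha> x) (\<alpha> y))"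

definition alpha_nilpotent :: "('a::zero \<Rightarrow> 'a \<Rightarrow> 'a set) \<Rightarrow> ('a \<Rightarrow> 'a) \<Rightarrow> 'a \<Rightarrow> bool" where
  "alpha_nilpotent hm \<alpha> x \<longleftrightarrow> (\<exists>n>0. 0 \<in> \<alpha> ` hpow hm x n)"

definition Nil_alpha :: "('a::zero \<Rightarrow> 'a \<Rightarrow> 'a set) \<Rightarrow> ('a \<Rightarrow> 'a) \<Rightarrow> 'a set" where
  "Nil_alpha hm \<alpha> = {x. alpha_nilpotent hm \<alpha> x}"

end

theory Submission
  imports Defs "HOL-Library.Multiset"
begin

text \<open>The kernel K of \<alpha> is a hyperideal, because 0 is absorbing for the hyperoperation,
  and the C-property of K shows that an \<alpha>-nilpotent x has a whole power x^n inside K.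
  Hence Nil_\<alpha>(R) is the radical of K, and the radical of any hyperideal is a hyperideal:
  closure under products follows from (r o x)^n \<subseteq> r^n o x^n, and if x^n, y^m \<subseteq> K then
  (x + y)^(n+m-1) \<subseteq> K by the binomial expansion, which distributivity provides as an inclusion.\<close>

lemma hsetprod_singletons: "hsetprod hm {a} {b} = hm a b"
  unfolding hsetprod_def by simp

lemma hsetprod_mono: "A \<subseteq> A' \<Longrightarrow> B \<subseteq> B' \<Longrightarrow> hsetprod hm A B \<subseteq> hsetprod hm A' B'"
  unfolding hsetprod_def by blast

lemma hsetprod_assoc:
  assumes "mult_hyperring hm"
  shows "hsetprod hm (hsetprod hm A B) C = hsetprod hm A (hsetprod hm B C)"
proof -
  have assoc: "(\<Union>x\<in>hm a b. hm x c) = (\<Union>y\<in>hm b c. hm a y)" for a b c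
    using assms unfolding mult_hyperring_def hsetprod_def by simp
  have "hsetprod hm (hsetprod hm A B) C = (\<Union>a\<in>A. \<Union>b\<in>B. \<Union>c\<in>C. \<Union>x\<in>hm a b. hm x c)"
    unfolding hsetprod_def by blast
  also have "\<dots> = (\<Union>a\<in>A. \<Union>b\<in>B. \<Union>c\<in>C. \<Union>y\<in>hm b c. hm a y)"
    by (simp only: assoc)
  also have "\<dots> = hsetprod hm A (hsetprod hm B C)"
    unfolding hsetprod_def by blast
  finally show ?thesis .
qed

lemma hsetprod_commute:
  assumes "hcommutative hm"
  shows "hsetprod hm A B = hsetprod hm B A"
proof -
  have "hm a b = hm b a" for a b
    using assms unfolding hcommutative_def by blast
  then show ?thesis
    unfolding hsetprod_def by (subst SUP_commute) simp
qed

lemma hsetprod_nonempty: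
  assumes "mult_hyperring hm" "a \<in> A" "b \<in> B"
  shows "hsetprod hm A B \<noteq> {}"
proof -
  have "hm a b \<noteq> {}"
    using assms(1) unfolding mult_hyperring_def by (elim conjE allE)
  with assms(2,3) show ?thesis
    unfolding hsetprod_def by blast
qed

lemma hsetprod_add_left_subset:
  assumes "mult_hyperring hm"
  shows "hsetprod hm {a + b} B \<subseteq> setsum_add (hsetprod hm {a} B) (hsetprod hm {b} B)"
proof
  fix z assume "z \<in> hsetprod hm {a + b} B"
  then obtain c where c: "c \<in> B" "z \<in> hm (a + b) c"
    unfolding hsetprod_def by blast
  then obtain u v where "z = u + v" "u \<in> hm a c" "v \<in> hm b c"
    using assms unfolding mult_hyperring_def setsum_add_def by blast
  with c(1) show "z \<in> setsum_add (hsetprod hm {a} B) (hsetprod hm {b} B)"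
    unfolding setsum_add_def hsetprod_def by blast
qed

lemma hyperideal_zero: "hyperideal hm I \<Longrightarrow> 0 \<in> I"
  unfolding hyperideal_def by force

lemma hyperideal_add:
  assumes "hyperideal hm I" "x \<in> I" "y \<in> I"
  shows "x + y \<in> I"
proof -
  have "0 - y \<in> I"
    using assms hyperideal_zero[OF assms(1)] unfolding hyperideal_def by blast
  then have "x - (0 - y) \<in> I"
    using assms unfolding hyperideal_def by blast
  then show ?thesis by simp
qed

lemma hyperideal_hsetprod_subset:
  "hyperideal hm I \<Longrightarrow> A \<subseteq> I \<Longrightarrow> hsetprod hm B A \<subseteq> I"
  unfolding hyperideal_def hsetprod_def by blast

locale comm_mult_hyperring =
  fixes hm :: "'a::ab_group_add \<Rightarrow> 'a \<Rightarrow> 'a set" and one :: 'a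
  assumes mult_hyperring: "mult_hyperring hm"
    and commutative: "hcommutative hm"
    and scalar_one: "scalar_identity hm one"
begin

lemma hm_commute: "hm a b = hm b a"
  using commutative unfolding hcommutative_def by blast

lemma hm_one_left [simp]: "hm one a = {a}"
  using scalar_one unfolding scalar_identity_def by blast

lemma hm_one_right [simp]: "hm a one = {a}"
  by (simp add: hm_commute[of a])

lemma hm_nonempty: "hm a b \<noteq> {}"
  using mult_hyperring unfolding mult_hyperring_def by (elim conjE allE)

lemma hm_uminus_left: "hm (- a) b = uminus ` hm a b"
  using mult_hyperring unfolding mult_hyperring_def by (elim conjE allE)

lemma hm_zero_right [simp]: "hm a 0 = {0}"
proof -
  have "hm (one + - one) a \<subseteq> setsum_add (hm one a) (hm (- one) a)"
    using mult_hyperring unfolding mult_hyperring_def by blast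
  then have "hm 0 a \<subseteq> setsum_add {a} {- a}"
    by (simp only: hm_uminus_left hm_one_left image_insert image_empty right_minus)
  then have "hm 0 a \<subseteq> {0}"
    by (simp add: setsum_add_def)
  then have "hm 0 a = {0}"
    using hm_nonempty by blast
  then show ?thesis
    by (simp only: hm_commute[of a])
qed

text \<open>Subsets form a commutative monoid under the elementwise product, so powers and finite
  products are taken as multiset products in it.\<close>

sublocale setprod: comm_monoid_mset "hsetprod hm" "{one}"
proof
  show "hsetprod hm (hsetprod hm A B) C = hsetprod hm A (hsetprod hm B C)" for A B C
    using hsetprod_assoc[OF mult_hyperring] .
  show "hsetprod hm A B = hsetprod hm B A" for A B
    using hsetprod_commute[OF commutative] .
  show "hsetprod hm A {one} = A" for A
    by (simp add: hsetprod_def)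
qed

abbreviation hpower :: "nat \<Rightarrow> 'a \<Rightarrow> 'a set" where
  "hpower n x \<equiv> setprod.F (replicate_mset n {x})"

lemma hpower_add: "hpower (n + m) x = hsetprod hm (hpower n x) (hpower m x)"
  by (induction n) (simp_all add: setprod.assoc)

lemma hpower_nonempty: "hpower n x \<noteq> {}"
proof (induction n)
  case (Suc n)
  then obtain w where "w \<in> hpower n x"
    by blast
  then show ?case
    using hsetprod_nonempty[OF mult_hyperring, of x "{x}" w] by simp
qed simp

lemma hpow_eq_hpower: "n > 0 \<Longrightarrow> hpow hm x n = hpower n x"
proof (induction n)
  case (Suc n)
  then show ?case by (cases n) (simp_all add: setprod.commute)
qed simp

lemma lprod_eq_setprod: "xs \<noteq> [] \<Longrightarrow> lprod hm xs = setprod.F (mset (map (\<lambda>a. {a}) xs))"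
proof (induction xs)
  case (Cons a xs)
  then show ?case by (cases xs) simp_all
qed simp

lemma hpow_eq_lprod: "n > 0 \<Longrightarrow> hpow hm x n = lprod hm (replicate n x)"
  by (simp add: hpow_eq_hpower lprod_eq_setprod mset_replicate)

lemma hpower_hm_subset:
  assumes "z \<in> hm r x"
  shows "hpower n z \<subseteq> hsetprod hm (hpower n r) (hpower n x)"
proof (induction n)
  case (Suc n)
  have "hpower (Suc n) z = hsetprod hm {z} (hpower n z)"
    by simp
  also have "\<dots> \<subseteq> hsetprod hm (hsetprod hm {r} {x}) (hsetprod hm (hpower n r) (hpower n x))"
    using Suc assms by (intro hsetprod_mono) (simp_all add: hsetprod_singletons)
  also have "\<dots> = hsetprod hm (hpower (Suc n) r) (hpower (Suc n) x)"
    by (simp add: setprod.assoc setprod.commute setprod.left_commute)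
  finally show ?case .
qed simp

text \<open>Every term of the binomial expansion of (x + y)^k x^i y^j is a product x^i' y^j' with
  i' + j' = i + j + k \<ge> n + m - 1, hence i' \<ge> n or j' \<ge> m.\<close>

lemma hpower_binomial_subset:
  assumes I: "hyperideal hm I" and x: "hpower n x \<subseteq> I" and y: "hpower m y \<subseteq> I"
  shows "n + m \<le> Suc (i + j + k) \<Longrightarrow>
    hsetprod hm (hpower k (x + y)) (hsetprod hm (hpower i x) (hpower j y)) \<subseteq> I"
proof (induction k arbitrary: i j)
  case 0
  show ?case
  proof (cases "n \<le> i")
    case True
    then have "hsetprod hm (hpower i x) (hpower j y)
        = hsetprod hm (hsetprod hm (hpower (i - n) x) (hpower j y)) (hpower n x)"
      using hpower_add[of n "i - n" x] by (simp add: setprod.assoc setprod.commute setprod.left_commute)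
    then show ?thesis
      using hyperideal_hsetprod_subset[OF I x] by simp
  next
    case False
    with 0 have "hsetprod hm (hpower i x) (hpower j y)
        = hsetprod hm (hsetprod hm (hpower i x) (hpower (j - m) y)) (hpower m y)"
      using hpower_add[of m "j - m" y] by (simp add: setprod.assoc setprod.commute setprod.left_commute)
    then show ?thesis
      using hyperideal_hsetprod_subset[OF I y] by simp
  qed
next
  case (Suc k)
  define B where "B = hsetprod hm (hpower k (x + y)) (hsetprod hm (hpower i x) (hpower j y))"
  have "hsetprod hm {x} B \<subseteq> I"
    using Suc.IH[of "Suc i" j] Suc.prems unfolding B_def
    by (simp add: setprod.assoc setprod.commute setprod.left_commute)
  moreover have "hsetprod hm {y} B \<subseteq> I"
    using Suc.IH[of i "Suc j"] Suc.prems unfolding B_def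
    by (simp add: setprod.assoc setprod.commute setprod.left_commute)
  ultimately have "setsum_add (hsetprod hm {x} B) (hsetprod hm {y} B) \<subseteq> I"
    using hyperideal_add[OF I] unfolding setsum_add_def by blast
  moreover have "hsetprod hm (hpower (Suc k) (x + y)) (hsetprod hm (hpower i x) (hpower j y))
      = hsetprod hm {x + y} B"
    unfolding B_def by (simp add: setprod.assoc)
  ultimately show ?case
    using hsetprod_add_left_subset[OF mult_hyperring, of x y B] by blast
qed

definition radical :: "'a set \<Rightarrow> 'a set" where
  "radical I = {x. \<exists>n>0. hpower n x \<subseteq> I}"

lemma radical_hm_closed:
  assumes "hyperideal hm I" "x \<in> radical I" "z \<in> hm r x"
  shows "z \<in> radical I"
proof -
  obtain n where "n > 0" "hpower n x \<subseteq> I"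
    using assms(2) unfolding radical_def by blast
  moreover have "hpower n z \<subseteq> hsetprod hm (hpower n r) (hpower n x)"
    using hpower_hm_subset[OF assms(3)] .
  ultimately show ?thesis
    using hyperideal_hsetprod_subset[OF assms(1)] unfolding radical_def by blast
qed

lemma radical_add_closed:
  assumes "hyperideal hm I" "x \<in> radical I" "y \<in> radical I"
  shows "x + y \<in> radical I"
proof -
  obtain n m where "n > 0" "hpower n x \<subseteq> I" "m > 0" "hpower m y \<subseteq> I"
    using assms(2,3) unfolding radical_def by blast
  then have "hsetprod hm (hpower (n + m - 1) (x + y)) (hsetprod hm (hpower 0 x) (hpower 0 y)) \<subseteq> I"
    using hpower_binomial_subset[OF assms(1), of n x m y 0 0 "n + m - 1"] by simp
  with \<open>n > 0\<close> \<open>m > 0\<close> show ?thesis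
    unfolding radical_def by (intro CollectI exI[of _ "n + m - 1"]) simp
qed

lemma radical_hyperideal:
  assumes "hyperideal hm I"
  shows "hyperideal hm (radical I)"
  unfolding hyperideal_def
proof (intro conjI ballI allI subsetI)
  have "0 \<in> radical I"
    using hyperideal_zero[OF assms] unfolding radical_def by (intro CollectI exI[of _ 1]) simp
  then show "radical I \<noteq> {}"
    by blast
next
  fix r x z assume "x \<in> radical I" "z \<in> hm r x"
  then show "z \<in> radical I"
    using radical_hm_closed[OF assms] by blast
next
  fix x y assume "x \<in> radical I" "y \<in> radical I"
  moreover have "- y \<in> hm (- one) y"
    by (simp add: hm_uminus_left)
  then have "- y \<in> radical I"
    using radical_hm_closed[OF assms \<open>y \<in> radical I\<close>] by blast
  ultimately have "x + - y \<in> radical I"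
    using radical_add_closed[OF assms] by blast
  then show "x - y \<in> radical I"
    by (simp only: diff_conv_add_uminus)
qed

lemma kernel_hyperideal:
  assumes "good_endomorphism hm \<alpha>"
  shows "hyperideal hm {v. \<alpha> v = 0}"
proof -
  have add: "\<alpha> (x + y) = \<alpha> x + \<alpha> y" and mult: "\<alpha> ` hm x y = hm (\<alpha> x) (\<alpha> y)" for x y
    using assms unfolding good_endomorphism_def by blast+
  have "\<alpha> 0 = 0"
    using add[of 0 0] by simp
  moreover have "\<alpha> (x - y) = \<alpha> x - \<alpha> y" for x y
    using add[of "x - y" y] by (simp add: eq_diff_eq)
  moreover have "\<alpha> z = 0" if "\<alpha> x = 0" "z \<in> hm r x" for r x z
    using mult[of r x] that by auto
  ultimately show ?thesis
    unfolding hyperideal_def by auto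
qed

lemma Nil_alpha_eq_radical_kernel:
  assumes "C_hyperideal hm {v. \<alpha> v = 0}"
  shows "Nil_alpha hm \<alpha> = radical {v. \<alpha> v = 0}"
proof (intro set_eqI iffI)
  fix x assume "x \<in> Nil_alpha hm \<alpha>"
  then obtain n where n: "n > 0" "0 \<in> \<alpha> ` hpow hm x n"
    unfolding Nil_alpha_def alpha_nilpotent_def by blast
  then have "lprod hm (replicate n x) \<inter> {v. \<alpha> v = 0} \<noteq> {}"
    by (auto simp: hpow_eq_lprod)
  then have "lprod hm (replicate n x) \<subseteq> {v. \<alpha> v = 0}"
    using assms n(1) unfolding C_hyperideal_def by simp
  then have "hpower n x \<subseteq> {v. \<alpha> v = 0}"
    using n(1) by (simp add: hpow_eq_lprod[symmetric] hpow_eq_hpower)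
  with n(1) show "x \<in> radical {v. \<alpha> v = 0}"
    unfolding radical_def by blast
next
  fix x assume "x \<in> radical {v. \<alpha> v = 0}"
  then obtain n where n: "n > 0" "hpower n x \<subseteq> {v. \<alpha> v = 0}"
    unfolding radical_def by blast
  obtain w where "w \<in> hpower n x"
    using hpower_nonempty by blast
  with n show "x \<in> Nil_alpha hm \<alpha>"
    unfolding Nil_alpha_def alpha_nilpotent_def by (force simp: hpow_eq_hpower)
qed

end

theorem mainTheorem10:
  fixes hm :: "'a::ab_group_add \<Rightarrow> 'a \<Rightarrow> 'a set"
    and \<alpha> :: "'a \<Rightarrow> 'a" and one :: 'a
  assumes "mult_hyperring hm"
    and "hcommutative hm"
    and "scalar_identity hm one"
    and "\<forall>I. hyperideal hm I \<longrightarrow> C_hyperideal hm I"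
    and "good_endomorphism hm \<alpha>"
  shows "hyperideal hm (Nil_alpha hm \<alpha>)"
proof -
  interpret comm_mult_hyperring hm one
    using assms(1-3) by unfold_locales
  have kernel: "hyperideal hm {v. \<alpha> v = 0}"
    using kernel_hyperideal[OF assms(5)] .
  then have "Nil_alpha hm \<alpha> = radical {v. \<alpha> v = 0}"
    using assms(4) Nil_alpha_eq_radical_kernel by blast
  with kernel show ?thesis
    using radical_hyperideal by simp
qed

end
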